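(* Define integers $Q(n)$ by $Q(0)=0$, $Q(1)=1$ and $Q(n)=b(n)Q(n-1)+Q(n-2)$ for $n\ge2$, where $b(n)=2n/3$ if $3\mid n$ and $b(n)=1$ if $3\nmid n$. Let $n>1$ be an integer and let $N$ be the unique integer with $3N\le n<3(N+1)$. If $m$ is a positive integer with $Q(n)\le m!$, then $N<m$ and $n<3m$.
   Context: $Q(n)$ is the denominator of the $n$th convergent of the simple continued fraction $e=[2,1,2,1,1,4,1,1,6,\dots]$; its first values are $0,1,1,3,4,7,32,39,71,465,\dots$. *)

theory Defs
  imports Main
begin

definition b :: "nat \<Rightarrow> int" where
  "b n = (if 3 dvd n then int (2 * n div 3) else 1)"

fun Q :: "nat \<Rightarrow> int" where
  "Q 0 = 0"
| "Q (Suc 0) = 1"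
| "Q (Suc (Suc n)) = b (Suc (Suc n)) * Q (Suc n) + Q n"

end

theory Submission
  imports Defs
begin

text \<open>Every partial quotient is at least 1, so the denominators are nonnegative and
  nondecreasing; the partial quotient 2(k+1) at index 3(k+1) gives Q(3k+3) \<ge> (k+1) Q(3k),
  hence Q(3N) \<ge> 3 N!. So m \<le> N would force m! \<ge> Q n \<ge> Q(3N) \<ge> 3 N! > m!.\<close>

lemma b_Suc_Suc_ge_1: "b (Suc (Suc n)) \<ge> 1"
  unfolding b_def by auto

lemma b_3_mult: "b (3 * k) = 2 * int k"
  unfolding b_def by auto

lemma Q_nonneg_and_le_Suc: "0 \<le> Q n \<and> Q n \<le> Q (Suc n)"
proof (induction n rule: nat_less_induct)
  case (1 n)
  show ?case
  proof (cases n)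
    case 0
    then show ?thesis by simp
  next
    case (Suc k)
    then have IH: "0 \<le> Q k" "Q k \<le> Q n"
      using "1" by auto
    have "Q n \<le> b (Suc (Suc k)) * Q n"
      using IH b_Suc_Suc_ge_1[of k] by (simp add: mult_le_cancel_right1)
    moreover have "Q (Suc n) = b (Suc (Suc k)) * Q n + Q k"
      using Suc by simp
    ultimately show ?thesis
      using IH by linarith
  qed
qed

lemma Q_nonneg: "0 \<le> Q n"
  using Q_nonneg_and_le_Suc by blast

lemma mono_Q: "mono Q"
  using Q_nonneg_and_le_Suc by (blast intro: mono_iff_le_Suc[THEN iffD2])

lemma Q_3_mult_ge_fact: "k \<ge> 1 \<Longrightarrow> 3 * int (fact k) \<le> Q (3 * k)"
proof (induction k rule: dec_induct)
  case base
  have "b 2 = 1" "b 3 = 2"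
    unfolding b_def by auto
  then show ?case
    by (simp add: numeral_3_eq_3 numeral_2_eq_2)
next
  case (step k)
  have "Q (3 * Suc k) = b (3 * Suc k) * Q (3 * k + 2) + Q (3 * k + 1)"
  proof -
    have "3 * Suc k = Suc (Suc (3 * k + 1))" "Suc (3 * k + 1) = 3 * k + 2"
      by simp_all
    then show ?thesis
      by (metis Q.simps(3))
  qed
  also have "\<dots> = 2 * int (Suc k) * Q (3 * k + 2) + Q (3 * k + 1)"
    by (simp only: b_3_mult)
  also have "\<dots> \<ge> int (Suc k) * Q (3 * k)"
  proof -
    have "Q (3 * k) \<le> Q (3 * k + 2)"
      using mono_Q le_add1 by (rule monoD)
    moreover have "0 \<le> Q (3 * k)"
      by (rule Q_nonneg)
    ultimately have "int (Suc k) * Q (3 * k) \<le> int (Suc k) * (2 * Q (3 * k + 2))"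
      by (intro mult_left_mono) linarith+
    then show ?thesis
      using Q_nonneg[of "3 * k + 1"] by (simp only: mult.assoc mult.left_commute[of 2])
  qed
  finally have "int (Suc k) * Q (3 * k) \<le> Q (3 * Suc k)" .
  moreover have "int (Suc k) * (3 * int (fact k)) \<le> int (Suc k) * Q (3 * k)"
    using step.IH by (intro mult_left_mono) auto
  ultimately show ?case
    by (simp add: algebra_simps)
qed

theorem lemmaA3:
  fixes n m N :: nat
  assumes "n > 1"
    and "3 * N \<le> n" and "n < 3 * (N + 1)"
    and "m > 0"
    and "Q n \<le> int (fact m)"
  shows "N < m \<and> n < 3 * m"
proof -
  have "N < m"
  proof (rule ccontr)
    assume "\<not> N < m"
    then have "m \<le> N" "1 \<le> N"
      using \<open>m > 0\<close> by simp_all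
    have "3 * int (fact N) \<le> Q (3 * N)"
      using \<open>1 \<le> N\<close> by (rule Q_3_mult_ge_fact)
    also have "\<dots> \<le> Q n"
      using mono_Q \<open>3 * N \<le> n\<close> by (rule monoD)
    also have "\<dots> \<le> int (fact m)"
      by (fact assms(5))
    also have "\<dots> \<le> int (fact N)"
      using fact_mono_nat[OF \<open>m \<le> N\<close>] by linarith
    finally show False
      by (simp add: fact_gt_zero)
  qed
  then show ?thesis
    using \<open>n < 3 * (N + 1)\<close> by simp
qed

end
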